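(* Let $q\geq4$ be an even integer, $n=q^2-1$, and let $A_0=I,A_1,A_2,A_3$ be the adjacency matrices of a symmetric 3-class association scheme on $n$ points with first eigenmatrix \[ P=\begin{bmatrix}1&\frac{q^2}{2}-q&\frac{q^2}{2}&q-2\\ 1&\frac q2&-\frac q2&-1\\ 1&-\frac q2+1&-\frac q2&q-2\\ 1&-\frac q2&\frac q2&-1\end{bmatrix}. \] Let $w_3$ be a complex number with $w_3+\frac1{w_3}+q^2-3=0$. (a) If $W=A_0+w_3(A_1+A_2+A_3)$, then $W$ and $W^{(-)}$ are inequivalent. (b) If $W=A_0+w_1A_1+w_1A_2+w_3A_3$ with $w_1=\frac{-(q-3)w_3+(q-1)}{q^2-2q-1}$, then $W$ and $W^{(-)}$ are inequivalent.
   Context: A symmetric association scheme with adjacency matrices $A_0=I,\dots,A_d$: symmetric $(0,1)$-matrices summing to $J$ whose span is closed under multiplication; with primitive idempotents $E_0=\frac1nJ,\dots,E_d$, the first eigenmatrix is defined by $A_j=\sum_iP_{i,j}E_i$. The matrices $W$ in (a) and (b) are type-II matrices, i.e. have nonzero complex entries and satisfy $W(W^{(-)})^\top=nI$, where $W^{(-)}$ is the entrywise inverse of $W$. Two type-II matrices $W_1,W_2$ are equivalent if there exist invertible diagonal matrices $D,D'$ and permutation matrices $T,T'$ with $DW_1D'=TW_2T'$. *)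

theory Defs
  imports "HOL-Combinatorics.Permutations" "HOL-Library.Function_Algebras" Complex_Main
begin

type_synonym 'v cmat = "'v \<Rightarrow> 'v \<Rightarrow> complex"

definition mmult :: "'v::finite cmat \<Rightarrow> 'v cmat \<Rightarrow> 'v cmat" where
  "mmult A B = (\<lambda>x y. \<Sum>z\<in>UNIV. A x z * B z y)"

definition idm :: "'v cmat" where
  "idm = (\<lambda>x y. if x = y then 1 else 0)"

definition Jm :: "'v cmat" where
  "Jm = (\<lambda>x y. 1)"

definition smult_m :: "complex \<Rightarrow> 'v cmat \<Rightarrow> 'v cmat" where
  "smult_m c M = (\<lambda>x y. c * M x y)"

definition transp_m :: "'v cmat \<Rightarrow> 'v cmat" where
  "transp_m M = (\<lambda>x y. M y x)"

definition entry_inv :: "'v cmat \<Rightarrow> 'v cmat" where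
  "entry_inv W = (\<lambda>x y. inverse (W x y))"

definition sym_assoc_scheme :: "nat \<Rightarrow> (nat \<Rightarrow> 'v::finite cmat) \<Rightarrow> bool" where
  "sym_assoc_scheme d A \<longleftrightarrow>
     A 0 = idm \<and>
     (\<forall>i\<le>d. (\<forall>x y. A i x y = 0 \<or> A i x y = 1) \<and> transp_m (A i) = A i \<and> A i \<noteq> 0) \<and>
     (\<Sum>i\<le>d. A i) = Jm \<and>
     (\<forall>i\<le>d. \<forall>j\<le>d. \<exists>c. mmult (A i) (A j) = (\<Sum>k\<le>d. smult_m (c k) (A k)))"

text \<open>P is the first eigenmatrix: there are primitive idempotents E 0 = J/n, E 1, ..., E d
  of the Bose-Mesner algebra (pairwise orthogonal nonzero idempotents of the algebra summing
  to I; since there are d+1 of them in a (d+1)-dimensional algebra they are exactly the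
  primitive idempotents) with A j = sum_i P i j E i.\<close>
definition first_eigenmatrix :: "nat \<Rightarrow> (nat \<Rightarrow> 'v::finite cmat) \<Rightarrow> (nat \<Rightarrow> nat \<Rightarrow> complex) \<Rightarrow> bool" where
  "first_eigenmatrix d A P \<longleftrightarrow>
     (\<exists>E :: nat \<Rightarrow> 'v cmat.
        E 0 = smult_m (1 / of_nat (card (UNIV :: 'v set))) Jm \<and>
        (\<forall>i\<le>d. \<forall>j\<le>d. mmult (E i) (E j) = (if i = j then E i else 0)) \<and>
        (\<forall>i\<le>d. E i \<noteq> 0) \<and>
        (\<Sum>i\<le>d. E i) = idm \<and>
        (\<forall>i\<le>d. \<exists>c. E i = (\<Sum>k\<le>d. smult_m (c k) (A k))) \<and>
        (\<forall>j\<le>d. A j = (\<Sum>i\<le>d. smult_m (P i j) (E i))))"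

definition diagonal_m :: "'v cmat \<Rightarrow> bool" where
  "diagonal_m D \<longleftrightarrow> (\<forall>x y. x \<noteq> y \<longrightarrow> D x y = 0)"

definition invertible_m :: "'v::finite cmat \<Rightarrow> bool" where
  "invertible_m D \<longleftrightarrow> (\<exists>D'. mmult D D' = idm \<and> mmult D' D = idm)"

definition permutation_m :: "'v cmat \<Rightarrow> bool" where
  "permutation_m T \<longleftrightarrow> (\<exists>\<sigma>. \<sigma> permutes UNIV \<and> T = (\<lambda>x y. if \<sigma> x = y then 1 else 0))"

definition typeII_equiv :: "'v::finite cmat \<Rightarrow> 'v cmat \<Rightarrow> bool" where
  "typeII_equiv W1 W2 \<longleftrightarrow>
     (\<exists>D D' T T'. diagonal_m D \<and> invertible_m D \<and> diagonal_m D' \<and> invertible_m D' \<and>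
        permutation_m T \<and> permutation_m T' \<and>
        mmult (mmult D W1) D' = mmult (mmult T W2) T')"

definition P58 :: "nat \<Rightarrow> nat \<Rightarrow> nat \<Rightarrow> complex" where
  "P58 q i j = (let r = of_nat q :: complex in
     [[1, r^2/2 - r, r^2/2, r - 2],
      [1, r/2, -r/2, -1],
      [1, -r/2 + 1, -r/2, r - 2],
      [1, -r/2, r/2, -1]] ! i ! j)"

end

(* In both matrices the diagonal is 1 and, in every row and column, all but a few entries
   (one in (a); the q - 1 entries on the diagonal or in A 3 in (b), since A 3 has valency
   q - 2) equal a single value g, namely w3 resp. w1. If D W D' = T W^(-) T', comparing
   entries at which both W and the rearranged W^(-) are generic forces D x x * D' x x = g^-2,
   while at the diagonal the same product is the inverse of an entry of W; hence g^2 would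
   be an entry of W. But w3 is a negative real number and w1 a positive real number other
   than 1, so g^2 is none of 1, w3, w1. *)

theory Submission
  imports Defs
begin

lemma sum_fun_apply: "(sum f I) x = (\<Sum>i\<in>I. f i x)"
  by (induction I rule: infinite_finite_induct) auto

lemma ex_not_in_small_sets:
  fixes Ss :: "'v::finite set list"
  assumes small: "\<forall>S\<in>set Ss. card S \<le> m"
    and "length Ss * m < card (UNIV :: 'v set)"
  shows "\<exists>y. \<forall>S\<in>set Ss. y \<notin> S"
proof (rule ccontr)
  assume "\<not> ?thesis"
  then have "UNIV = \<Union>(set Ss)" by blast
  then have "card (UNIV :: 'v set) \<le> sum card (set Ss)"
    using card_Union_le_sum_card by metis
  also have "\<dots> \<le> card (set Ss) * m"
    using sum_bounded_above[of "set Ss" card m] small by simp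
  also have "\<dots> \<le> length Ss * m"
    by (simp add: card_length)
  finally show False
    using assms(2) by simp
qed

lemma mmult_diagonal_left:
  assumes "diagonal_m D"
  shows "mmult D M x y = D x x * M x y"
proof -
  have "mmult D M x y = (\<Sum>z\<in>UNIV. if z = x then D x x * M x y else 0)"
    unfolding mmult_def using assms unfolding diagonal_m_def by (intro sum.cong) auto
  then show ?thesis by simp
qed

lemma mmult_diagonal_right:
  assumes "diagonal_m D"
  shows "mmult M D x y = M x y * D y y"
proof -
  have "mmult M D x y = (\<Sum>z\<in>UNIV. if z = y then M x y * D y y else 0)"
    unfolding mmult_def using assms unfolding diagonal_m_def by (intro sum.cong) auto
  then show ?thesis by simp
qed

lemma mmult_permutation_left:
  "mmult (\<lambda>x y. if \<sigma> x = y then 1 else 0) M x y = M (\<sigma> x) y"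
proof -
  have "mmult (\<lambda>x y. if \<sigma> x = y then 1 else 0) M x y
      = (\<Sum>z\<in>UNIV. if \<sigma> x = z then M z y else 0)"
    unfolding mmult_def by (intro sum.cong) auto
  then show ?thesis by simp
qed

lemma mmult_permutation_right:
  assumes "\<tau> permutes UNIV"
  shows "mmult M (\<lambda>x y. if \<tau> x = y then 1 else 0) x y = M x (inv \<tau> y)"
proof -
  have "mmult M (\<lambda>x y. if \<tau> x = y then 1 else 0) x y
      = (\<Sum>z\<in>UNIV. if inv \<tau> y = z then M x z else 0)"
    unfolding mmult_def using permutes_inv_eq[OF assms] by (intro sum.cong) auto
  then show ?thesis by simp
qed

lemma typeII_equiv_entrywise:
  assumes "typeII_equiv W1 W2"
  obtains d e \<alpha> \<beta> where "inj \<alpha>" "inj \<beta>" "\<And>x y. d x * W1 x y * e y = W2 (\<alpha> x) (\<beta> y)"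
proof -
  obtain D D' T T' where D: "diagonal_m D" "diagonal_m D'"
    and T: "permutation_m T" "permutation_m T'"
    and eq: "mmult (mmult D W1) D' = mmult (mmult T W2) T'"
    using assms unfolding typeII_equiv_def by blast
  obtain \<sigma> \<tau> where \<sigma>: "\<sigma> permutes UNIV" "T = (\<lambda>x y. if \<sigma> x = y then 1 else 0)"
    and \<tau>: "\<tau> permutes UNIV" "T' = (\<lambda>x y. if \<tau> x = y then 1 else 0)"
    using T unfolding permutation_m_def by blast
  have "D x x * W1 x y * D' y y = W2 (\<sigma> x) (inv \<tau> y)" for x y
    using fun_cong[OF fun_cong[OF eq, of x], of y] D \<sigma> \<tau>
    by (simp add: mmult_diagonal_left mmult_diagonal_right mmult_permutation_left
        mmult_permutation_right)
  moreover have "inj \<sigma>" "inj (inv \<tau>)"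
    using \<sigma>(1) \<tau>(1) permutes_inj permutes_inv by blast+
  ultimately show ?thesis
    using that[of \<sigma> "inv \<tau>" "\<lambda>x. D x x" "\<lambda>y. D' y y"] by blast
qed

lemma card_reindex_le:
  fixes P :: "'a::finite \<Rightarrow> bool"
  assumes "inj f"
  shows "card {y. P (f y)} \<le> card {v. P v}"
  by (rule card_inj_on_le[OF inj_on_subset[OF assms]]) auto

text \<open>Since \<open>4 m\<close> exceptional entries per row or column cannot cover all points,
  one finds \<open>y\<close> and then \<open>x'\<close> such that both \<open>W\<close> and
  \<open>\<lambda>u v. W (\<alpha> u) (\<beta> v)\<close> equal \<open>g\<close> at \<open>(x, y)\<close>,
  \<open>(x', x)\<close> and \<open>(x', y)\<close>; comparing these three entries gives
  \<open>d x * e x = g\<^sup>-\<^sup>2\<close>.\<close>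
lemma square_entry_of_equiv_entry_inv:
  fixes W :: "'v::finite cmat" and g :: complex
  assumes row: "\<And>x. card {y. W x y \<noteq> g} \<le> m"
    and col: "\<And>y. card {x. W x y \<noteq> g} \<le> m"
    and large: "4 * m < card (UNIV :: 'v set)"
    and diag: "\<And>x. W x x = 1" and "g \<noteq> 0"
    and "inj \<alpha>" "inj \<beta>"
    and eq: "\<And>x y. d x * W x y * e y = inverse (W (\<alpha> x) (\<beta> y))"
  shows "\<exists>u v. W u v = g\<^sup>2"
proof -
  have row': "card {y. W (\<alpha> x) (\<beta> y) \<noteq> g} \<le> m" for x
    using card_reindex_le[OF \<open>inj \<beta>\<close>, of "\<lambda>v. W (\<alpha> x) v \<noteq> g"] row[of "\<alpha> x"] by simp
  have col': "card {x. W (\<alpha> x) (\<beta> y) \<noteq> g} \<le> m" for y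
    using card_reindex_le[OF \<open>inj \<alpha>\<close>, of "\<lambda>u. W u (\<beta> y) \<noteq> g"] col[of "\<beta> y"] by simp
  fix x
  obtain y where y: "W x y = g" "W (\<alpha> x) (\<beta> y) = g"
    using ex_not_in_small_sets[of "[{y. W x y \<noteq> g}, {y. W (\<alpha> x) (\<beta> y) \<noteq> g}]" m]
      row[of x] row'[of x] large by auto
  obtain x' where x': "W x' x = g" "W x' y = g" "W (\<alpha> x') (\<beta> x) = g" "W (\<alpha> x') (\<beta> y) = g"
    using ex_not_in_small_sets[of "[{x'. W x' x \<noteq> g}, {x'. W x' y \<noteq> g},
        {x'. W (\<alpha> x') (\<beta> x) \<noteq> g}, {x'. W (\<alpha> x') (\<beta> y) \<noteq> g}]" m]
      col[of x] col[of y] col'[of x] col'[of y] large by auto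
  have dxy: "d x * g * e y = inverse g" and dx'x: "d x' * g * e x = inverse g"
    and dx'y: "d x' * g * e y = inverse g"
    using eq[of x y] eq[of x' x] eq[of x' y] y x' by simp_all
  moreover have "d x' * g \<noteq> 0"
    using dx'x \<open>g \<noteq> 0\<close> by auto
  ultimately have "e x = e y"
    by (metis mult_left_cancel)
  then have "d x * e x = inverse (g\<^sup>2)"
    using dxy \<open>g \<noteq> 0\<close> by (simp add: field_simps power2_eq_square)
  moreover have "d x * e x = inverse (W (\<alpha> x) (\<beta> x))"
    using eq[of x x] diag[of x] by simp
  ultimately show ?thesis
    by (metis inverse_inverse_eq)
qed

lemma not_typeII_equiv_entry_inv:
  fixes W :: "'v::finite cmat" and g :: complex
  assumes "\<And>x. card {y. W x y \<noteq> g} \<le> m" "\<And>y. card {x. W x y \<noteq> g} \<le> m"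
    and "4 * m < card (UNIV :: 'v set)"
    and "\<And>x. W x x = 1" and "g \<noteq> 0"
    and no_square: "\<And>u v. W u v \<noteq> g\<^sup>2"
  shows "\<not> typeII_equiv W (entry_inv W)"
proof
  assume "typeII_equiv W (entry_inv W)"
  then obtain d e \<alpha> \<beta> where "inj \<alpha>" "inj \<beta>"
    "\<And>x y. d x * W x y * e y = inverse (W (\<alpha> x) (\<beta> y))"
    using typeII_equiv_entrywise[of W "entry_inv W"] unfolding entry_inv_def by metis
  then show False
    using square_entry_of_equiv_entry_inv[OF assms(1-5)] no_square by blast
qed

lemma sym_assoc_scheme_entry_cases:
  assumes "sym_assoc_scheme d A" "i \<le> d"
  shows "A i x y = 0 \<or> A i x y = 1"
  using assms unfolding sym_assoc_scheme_def by blast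

lemma sym_assoc_scheme_symmetric:
  assumes "sym_assoc_scheme d A" "i \<le> d"
  shows "A i x y = A i y x"
  using assms unfolding sym_assoc_scheme_def transp_m_def by (metis (mono_tags))

lemma sym_assoc_scheme_partition:
  assumes "sym_assoc_scheme d A"
  shows "(\<Sum>i\<le>d. A i x y) = 1"
  using assms unfolding sym_assoc_scheme_def Jm_def by (metis sum_fun_apply)

lemma sum_zero_one_eq_card:
  assumes "finite S" "\<forall>z\<in>S. f z = 0 \<or> f z = (1 :: 'a::semiring_1)"
  shows "sum f S = of_nat (card {z\<in>S. f z = 1})"
proof -
  have "sum f S = (\<Sum>z\<in>S. if f z = 1 then 1 else 0)"
    using assms(2) by (intro sum.cong) auto
  then show ?thesis
    using assms(1) by (simp add: sum.If_cases Int_def)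
qed

text \<open>Multiplying \<open>A j = \<Sum>\<^sub>i P i j E i\<close> by \<open>E 0 = J/n\<close> and using
  orthogonality of the idempotents gives \<open>A j J = P 0 j J\<close>.\<close>
lemma first_eigenmatrix_row_sum:
  fixes A :: "nat \<Rightarrow> 'v::finite cmat"
  assumes "first_eigenmatrix d A P" "j \<le> d"
  shows "(\<Sum>z\<in>UNIV. A j x z) = P 0 j"
proof -
  define n where "n = card (UNIV :: 'v set)"
  obtain E where E0: "E 0 = smult_m (1 / of_nat n) Jm"
    and orth: "\<forall>i\<le>d. \<forall>k\<le>d. mmult (E i) (E k) = (if i = k then E i else 0)"
    and expand: "A j = (\<Sum>i\<le>d. smult_m (P i j) (E i))"
    using assms unfolding first_eigenmatrix_def n_def by blast
  have "n \<noteq> 0"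
    unfolding n_def by (simp add: finite_UNIV_card_ge_0)
  have "mmult (A j) (E 0) x x = (\<Sum>i\<le>d. P i j * mmult (E i) (E 0) x x)"
    unfolding expand mmult_def sum_fun_apply smult_m_def
    by (simp add: sum_distrib_left sum_distrib_right mult.assoc sum.swap[of _ UNIV])
  also have "\<dots> = (\<Sum>i\<le>d. if i = 0 then P 0 j * E 0 x x else 0)"
    using orth by (intro sum.cong) auto
  also have "\<dots> = P 0 j / of_nat n"
    by (simp add: E0 smult_m_def Jm_def)
  finally show ?thesis
    using \<open>n \<noteq> 0\<close> by (simp add: mmult_def E0 smult_m_def Jm_def flip: sum_divide_distrib)
qed

lemma first_eigenmatrix_valency:
  fixes A :: "nat \<Rightarrow> 'v::finite cmat"
  assumes "sym_assoc_scheme d A" "first_eigenmatrix d A P" "j \<le> d"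
  shows "of_nat (card {z. A j x z = 1}) = P 0 j"
  using first_eigenmatrix_row_sum[OF assms(2,3)] sum_zero_one_eq_card[of UNIV "A j x"]
    sym_assoc_scheme_entry_cases[OF assms(1,3)] by simp

lemma quadratic_root_negative_real:
  fixes w :: complex and k :: real
  assumes "2 \<le> k" and root: "w\<^sup>2 + of_real k * w + 1 = 0"
  shows "w = of_real (Re w)" and "Re w < 0"
proof -
  have re: "(Re w)\<^sup>2 - (Im w)\<^sup>2 + k * Re w + 1 = 0"
    and im: "Im w * (2 * Re w + k) = 0"
    using arg_cong[OF root, of Re] arg_cong[OF root, of Im]
    by (simp_all add: power2_eq_square algebra_simps)
  have "Im w = 0"
  proof (rule ccontr)
    assume "Im w \<noteq> 0"
    then have "2 * Re w + k = 0"
      using im by simp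
    moreover have "4 * (Im w)\<^sup>2 = (2 * Re w + k)\<^sup>2 + 4 - k\<^sup>2"
      using re by algebra
    ultimately have "4 * (Im w)\<^sup>2 = 4 - k\<^sup>2"
      by simp
    moreover have "k\<^sup>2 \<ge> 4"
      using \<open>2 \<le> k\<close> power_mono[of 2 k 2] by simp
    ultimately have "(Im w)\<^sup>2 \<le> 0"
      by linarith
    then show False
      using \<open>Im w \<noteq> 0\<close> by simp
  qed
  then show "w = of_real (Re w)"
    by (simp add: complex_eq_iff)
  have "(Re w)\<^sup>2 + k * Re w + 1 = 0"
    using re \<open>Im w = 0\<close> by simp
  then show "Re w < 0"
    using \<open>2 \<le> k\<close> by (smt (verit) mult_nonneg_nonneg zero_le_power2)
qed

lemma weight_from_negative_root:
  fixes r x :: real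
  assumes "4 \<le> r" "x < 0" and root: "x\<^sup>2 + (r\<^sup>2 - 3) * x + 1 = 0"
  shows "(- (r - 3) * x + (r - 1)) / (r\<^sup>2 - 2 * r - 1) > 0"
    and "(- (r - 3) * x + (r - 1)) / (r\<^sup>2 - 2 * r - 1) \<noteq> 1"
proof -
  have sq: "r\<^sup>2 \<ge> 4 * r"
    using mult_right_mono[OF \<open>4 \<le> r\<close>, of r] \<open>4 \<le> r\<close> by (simp add: power2_eq_square)
  then have den: "r\<^sup>2 - 2 * r - 1 > 0"
    using \<open>4 \<le> r\<close> by linarith
  have "(r - 3) * (- x) \<ge> 0"
    using assms(1,2) by (intro mult_nonneg_nonneg) simp_all
  then have "- (r - 3) * x + (r - 1) > 0"
    using \<open>4 \<le> r\<close> by (simp add: algebra_simps)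
  then show "(- (r - 3) * x + (r - 1)) / (r\<^sup>2 - 2 * r - 1) > 0"
    using den by simp
  show "(- (r - 3) * x + (r - 1)) / (r\<^sup>2 - 2 * r - 1) \<noteq> 1"
  proof
    assume "(- (r - 3) * x + (r - 1)) / (r\<^sup>2 - 2 * r - 1) = 1"
    then have "(r - 3) * x = (r - 3) * - r"
      using den by (simp add: field_simps power2_eq_square)
    moreover have "r - 3 \<noteq> 0"
      using \<open>4 \<le> r\<close> by simp
    ultimately have "x = - r"
      by (metis mult_left_cancel)
    then have "r * r\<^sup>2 = r\<^sup>2 + 3 * r + 1"
      using root by (simp add: power2_eq_square algebra_simps)
    moreover have "r * r\<^sup>2 \<ge> 4 * r\<^sup>2"
      using mult_right_mono[OF \<open>4 \<le> r\<close>, of "r\<^sup>2"] by simp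
    ultimately show False
      using sq \<open>4 \<le> r\<close> by linarith
  qed
qed

lemma sum_atMost_3: "(\<Sum>i\<le>(3::nat). f i) = f 0 + f 1 + f 2 + f 3"
  by (simp add: numeral_3_eq_3 numeral_2_eq_2 add.assoc)

context
  fixes q :: nat and A :: "nat \<Rightarrow> 'v::finite cmat" and w3 :: complex
  assumes q_ge_4: "q \<ge> 4"
    and card_points: "card (UNIV :: 'v set) = q\<^sup>2 - 1"
    and scheme: "sym_assoc_scheme 3 A"
    and eigenmatrix: "first_eigenmatrix 3 A (P58 q)"
    and w3_eq: "w3 + 1 / w3 + of_nat q ^ 2 - 3 = 0"
begin

lemma q_sq_ge_16: "16 \<le> q\<^sup>2"
  using power_mono[OF q_ge_4, of 2] by simp

lemma w3_negative_real:
  obtains x where "w3 = of_real x" "x < 0" "x\<^sup>2 + (real q ^ 2 - 3) * x + 1 = 0"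
proof -
  have "w3 \<noteq> 0"
  proof
    assume "w3 = 0"
    then have "of_nat (q\<^sup>2) = (of_nat 3 :: complex)"
      using w3_eq by simp
    then show False
      using q_sq_ge_16 by (simp only: of_nat_eq_iff)
  qed
  moreover have "w3 * (w3 + 1 / w3 + of_nat q ^ 2 - 3) = 0"
    by (simp add: w3_eq)
  ultimately have root: "w3\<^sup>2 + of_real (real q ^ 2 - 3) * w3 + 1 = 0"
    by (simp add: algebra_simps power2_eq_square)
  have "2 \<le> real q ^ 2 - 3"
    using q_sq_ge_16 by (simp flip: of_nat_power)
  note re = quadratic_root_negative_real[OF this root]
  define x where "x = Re w3"
  have "w3 = of_real x" "x < 0"
    using re unfolding x_def by simp_all
  moreover have "of_real (x\<^sup>2 + (real q ^ 2 - 3) * x + 1) = (0 :: complex)"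
    using root by (simp add: \<open>w3 = of_real x\<close>)
  ultimately show ?thesis
    using that by (simp only: of_real_eq_0_iff)
qed

lemma scheme_entry_cases: "i \<le> 3 \<Longrightarrow> A i u v = 0 \<or> A i u v = 1"
  by (rule sym_assoc_scheme_entry_cases[OF scheme])

lemma scheme_A0: "A 0 = idm"
  using scheme unfolding sym_assoc_scheme_def by simp

lemma scheme_partition: "A 1 u v + A 2 u v + A 3 u v = 1 - idm u v"
  using sym_assoc_scheme_partition[OF scheme, of u v]
  unfolding sum_atMost_3 scheme_A0 by (simp add: algebra_simps)

lemma uniform_weight_not_equiv_entry_inv:
  fixes W :: "'v cmat"
  defines "W \<equiv> A 0 + smult_m w3 (A 1 + A 2 + A 3)"
  shows "\<not> typeII_equiv W (entry_inv W)"
proof -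
  obtain x where w3: "w3 = of_real x" "x < 0" "x\<^sup>2 + (real q ^ 2 - 3) * x + 1 = 0"
    by (rule w3_negative_real)
  have W: "W u v = (if u = v then 1 else w3)" for u v
    using scheme_partition[of u v] by (simp add: W_def scheme_A0 smult_m_def idm_def)
  have row: "card {v. W u v \<noteq> w3} \<le> 1" for u
  proof -
    have "{v. W u v \<noteq> w3} \<subseteq> {u}"
      using W by auto
    then show ?thesis
      using card_mono[of "{u}"] by simp
  qed
  have col: "card {u. W u v \<noteq> w3} \<le> 1" for v
  proof -
    have "{u. W u v \<noteq> w3} \<subseteq> {v}"
      using W by auto
    then show ?thesis
      using card_mono[of "{v}"] by simp
  qed
  have "x\<^sup>2 \<noteq> 1"
  proof
    assume "x\<^sup>2 = 1"
    then have "x = -1"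
      using \<open>x < 0\<close> by (simp add: power2_eq_1_iff)
    then have "real (q\<^sup>2) = real 5"
      using w3(3) by simp
    then show False
      using q_sq_ge_16 by (simp only: of_nat_eq_iff)
  qed
  moreover have "x\<^sup>2 \<noteq> x"
    using \<open>x < 0\<close> by (smt (verit) zero_le_power2)
  ultimately have no_square: "W u v \<noteq> w3\<^sup>2" for u v
    unfolding W w3(1) by (auto simp flip: of_real_power)
  have "4 * 1 < card (UNIV :: 'v set)"
    using card_points q_sq_ge_16 by simp
  moreover have "W u u = 1" for u
    using W by simp
  moreover have "w3 \<noteq> 0"
    using w3 by simp
  ultimately show ?thesis
    using not_typeII_equiv_entry_inv[OF row col _ _ _ no_square] by blast
qed

lemma A3_valency: "card {v. A 3 u v = 1} = q - 2"
proof -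
  have "of_nat (card {v. A 3 u v = 1}) = P58 q 0 3"
    using first_eigenmatrix_valency[OF scheme eigenmatrix] by simp
  also have "\<dots> = of_nat (q - 2)"
    using q_ge_4 by (simp add: P58_def of_nat_diff)
  finally show ?thesis
    by (simp only: of_nat_eq_iff)
qed

lemma card_A3_closed_neighbourhood: "card (insert u {v. A 3 u v = 1}) \<le> q - 1"
proof -
  have "card (insert u {v. A 3 u v = 1}) \<le> Suc (card {v. A 3 u v = 1})"
    by (simp add: card_insert_if)
  then show ?thesis
    using A3_valency[of u] q_ge_4 by simp
qed

lemma card_points_gt: "4 * (q - 1) < card (UNIV :: 'v set)"
proof -
  have "4 * q \<le> q * q"
    using q_ge_4 by simp
  then show ?thesis
    using q_ge_4 card_points unfolding power2_eq_square by linarith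
qed

lemma two_weight_entry:
  "(A 0 + smult_m c (A 1) + smult_m c (A 2) + smult_m w3 (A 3)) u v
    = (if u = v then 1 else if A 3 u v = 1 then w3 else c)"
proof -
  have "(A 0 + smult_m c (A 1) + smult_m c (A 2) + smult_m w3 (A 3)) u v
      = idm u v + c * (A 1 u v + A 2 u v) + w3 * A 3 u v"
    by (simp add: scheme_A0 smult_m_def algebra_simps)
  then show ?thesis
    using scheme_partition[of u v] scheme_entry_cases[of 1 u v] scheme_entry_cases[of 2 u v]
      scheme_entry_cases[of 3 u v]
    by (auto simp: idm_def)
qed

lemma two_weight_not_equiv_entry_inv:
  fixes w1 :: complex and W :: "'v cmat"
  defines "w1 \<equiv> (- (of_nat q - 3) * w3 + (of_nat q - 1)) / (of_nat q ^ 2 - 2 * of_nat q - 1)"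
    and "W \<equiv> A 0 + smult_m w1 (A 1) + smult_m w1 (A 2) + smult_m w3 (A 3)"
  shows "\<not> typeII_equiv W (entry_inv W)"
proof -
  obtain x where w3: "w3 = of_real x" "x < 0" "x\<^sup>2 + (real q ^ 2 - 3) * x + 1 = 0"
    by (rule w3_negative_real)
  define y where "y = (- (real q - 3) * x + (real q - 1)) / ((real q)\<^sup>2 - 2 * real q - 1)"
  have w1: "w1 = of_real y"
    unfolding w1_def y_def w3(1) by simp
  have "y > 0" "y \<noteq> 1"
    using weight_from_negative_root[of "real q" x] q_ge_4 w3(2,3) unfolding y_def by auto
  have W: "W u v = (if u = v then 1 else if A 3 u v = 1 then w3 else w1)" for u v
    unfolding W_def by (rule two_weight_entry)
  have row: "card {v. W u v \<noteq> w1} \<le> q - 1" for u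
  proof -
    have "{v. W u v \<noteq> w1} \<subseteq> insert u {v. A 3 u v = 1}"
      using W by auto
    then have "card {v. W u v \<noteq> w1} \<le> card (insert u {v. A 3 u v = 1})"
      by (rule card_mono[OF finite])
    also have "\<dots> \<le> q - 1"
      by (rule card_A3_closed_neighbourhood)
    finally show ?thesis .
  qed
  have "W u v = W v u" for u v
    using W sym_assoc_scheme_symmetric[OF scheme, of 3 u v] by simp
  then have col: "card {u. W u v \<noteq> w1} \<le> q - 1" for v
    using row[of v] by (metis (no_types, lifting) Collect_cong)
  have "y\<^sup>2 \<noteq> 1"
    using \<open>y > 0\<close> \<open>y \<noteq> 1\<close> by (auto simp: power2_eq_1_iff)
  moreover have "y\<^sup>2 \<noteq> y"
    using \<open>y > 0\<close> \<open>y \<noteq> 1\<close> by (auto simp: power2_eq_square)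
  moreover have "y\<^sup>2 \<noteq> x"
    using \<open>x < 0\<close> by (smt (verit) zero_le_power2)
  ultimately have no_square: "W u v \<noteq> w1\<^sup>2" for u v
    unfolding W w1 w3(1) by (auto simp flip: of_real_power)
  have "W u u = 1" for u
    using W by simp
  moreover have "w1 \<noteq> 0"
    using w1 \<open>y > 0\<close> by simp
  ultimately show ?thesis
    using not_typeII_equiv_entry_inv[OF row col card_points_gt _ _ no_square] by blast
qed

end

theorem proposition5p8:
  fixes q :: nat and A :: "nat \<Rightarrow> 'v::finite cmat" and w3 :: complex
  assumes "even q" and "q \<ge> 4"
    and "card (UNIV :: 'v set) = q^2 - 1"
    and "sym_assoc_scheme 3 A"
    and "first_eigenmatrix 3 A (P58 q)"
    and "w3 + 1 / w3 + of_nat q ^ 2 - 3 = 0"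
  shows "(let W = A 0 + smult_m w3 (A 1 + A 2 + A 3)
          in \<not> typeII_equiv W (entry_inv W))
       \<and> (let w1 = (- (of_nat q - 3) * w3 + (of_nat q - 1)) / (of_nat q ^ 2 - 2 * of_nat q - 1);
              W = A 0 + smult_m w1 (A 1) + smult_m w1 (A 2) + smult_m w3 (A 3)
          in \<not> typeII_equiv W (entry_inv W))"
  unfolding Let_def
  using uniform_weight_not_equiv_entry_inv[OF assms(2-6)] two_weight_not_equiv_entry_inv[OF assms(2-6)]
  by blast

end
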